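(* If $(x,y)$ and $(x,y')$ are both $\mathbf{x}$-vertices of $R$, then $d_R((x,y),(x,y'))\le d(\bar B)$.
   Context: Let $A\in\mathbb{R}^{m_1\times n_1}$, nonzero $a\in\mathbb{R}^{1\times n_1}$, nonzero $b\in\mathbb{R}^{1\times n_2}$, $B\in\mathbb{R}^{m_2\times n_2}$, $c_A\in\mathbb{R}^{m_1}$, $c_B\in\mathbb{R}^{m_2}$, $c_a,c_b\in\mathbb{R}$, and $R=\{(x,y)\in\mathbb{R}^{n_1}\times\mathbb{R}^{n_2}: Ax=c_A,\ ax+by=c_a+c_b,\ By=c_B,\ x,y\ge 0\}$. Assume $R$ is simple (nondegenerate). Let $P_A=\{x: Ax=c_A, x\ge 0\}$ and $\bar B=\begin{bmatrix}b\\ B\end{bmatrix}$. A vertex $(x,y)$ of $R$ is an $\mathbf{x}$-vertex if $x$ is a vertex of $P_A$. $d_R(v,w)$ is the minimum number of edges of an edge walk in $R$ from $v$ to $w$. For a polyhedron $P$, $d(P)$ is its combinatorial diameter (maximum distance over pairs of vertices), and for a matrix $M\in\mathbb{R}^{m\times n}$, $d(M):=\max\{d(\{z: Mz=r, z\ge 0\}): r\in\mathbb{R}^m\}$. *)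

theory Defs
  imports "HOL-Analysis.Analysis" "HOL-Library.Extended_Nat"
begin

definition poly_adjacent :: "'a::euclidean_space set \<Rightarrow> 'a \<Rightarrow> 'a \<Rightarrow> bool" where
  "poly_adjacent P v w \<longleftrightarrow> v extreme_point_of P \<and> w extreme_point_of P \<and> v \<noteq> w
      \<and> closed_segment v w face_of P"

definition edge_walk :: "'a::euclidean_space set \<Rightarrow> 'a list \<Rightarrow> bool" where
  "edge_walk P vs \<longleftrightarrow> vs \<noteq> [] \<and> (\<forall>v\<in>set vs. v extreme_point_of P)
      \<and> (\<forall>i. Suc i < length vs \<longrightarrow> poly_adjacent P (vs ! i) (vs ! Suc i))"

text \<open>d_P(v,w): minimum number of edges of an edge walk from v to w (infinity if none).\<close>
definition poly_dist :: "'a::euclidean_space set \<Rightarrow> 'a \<Rightarrow> 'a \<Rightarrow> enat" where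
  "poly_dist P v w = (INF vs \<in> {vs. edge_walk P vs \<and> hd vs = v \<and> last vs = w}.
       enat (length vs - 1))"

definition poly_diam :: "'a::euclidean_space set \<Rightarrow> enat" where
  "poly_diam P = (SUP vw \<in> {(v, w). v extreme_point_of P \<and> w extreme_point_of P}.
       poly_dist P (fst vw) (snd vw))"

definition std_poly :: "real^'n^'m \<Rightarrow> real^'m \<Rightarrow> (real^'n) set" where
  "std_poly M r = {z. M *v z = r \<and> (\<forall>i. 0 \<le> z $ i)}"

definition mat_diam :: "real^'n^'m \<Rightarrow> enat" where
  "mat_diam M = (SUP r. poly_diam (std_poly M r))"

definition simple_polyhedron :: "'a::euclidean_space set \<Rightarrow> bool" where
  "simple_polyhedron P \<longleftrightarrow> polyhedron P \<and>
     (\<forall>v. v extreme_point_of P \<longrightarrow> int (card {F. F facet_of P \<and> v \<in> F}) = aff_dim P)"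

text \<open>The matrix B-bar obtained by stacking the row b on top of B
  (row index None is b, row Some i is row i of B).\<close>
definition stack_row :: "real^'n \<Rightarrow> real^'n^'m \<Rightarrow> real^'n^('m option)" where
  "stack_row b B = (\<chi> i. case i of None \<Rightarrow> b | Some j \<Rightarrow> B $ j)"

definition R_poly :: "real^'n1^'m1 \<Rightarrow> real^'n1 \<Rightarrow> real^'n2 \<Rightarrow> real^'n2^'m2
     \<Rightarrow> real^'m1 \<Rightarrow> real^'m2 \<Rightarrow> real \<Rightarrow> real \<Rightarrow> ((real^'n1) \<times> (real^'n2)) set" where
  "R_poly A a b B cA cB ca cb = {(x, y). A *v x = cA \<and> a \<bullet> x + b \<bullet> y = ca + cb
      \<and> B *v y = cB \<and> (\<forall>i. 0 \<le> x $ i) \<and> (\<forall>j. 0 \<le> y $ j)}"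

end

theory Submission
  imports Defs
begin

text \<open>Since \<open>x\<close> is a vertex of \<open>P\<^sub>A\<close> and \<open>R\<close> projects into \<open>P\<^sub>A\<close>,
  the fibre \<open>F = R \<inter> ({x} \<times> \<real>\<^sup>n\<^sup>2)\<close> is a face of \<open>R\<close>. Vertices and
  edges of a face are vertices and edges of the whole polyhedron, so edge walks in \<open>F\<close> are
  edge walks in \<open>R\<close>. Moreover \<open>F\<close> is the image under \<open>y \<mapsto> (x, y)\<close> of
  \<open>{y. b y = c\<^sub>a + c\<^sub>b - a x, B y = c\<^sub>B, y \<ge> 0}\<close>, a standard-form polyhedron of
  the stacked matrix \<open>[b; B]\<close>, whose diameter is bounded by \<open>d([b; B])\<close>.\<close>

lemma face_of_Pair_image_iff:
  fixes x0 :: "'a::euclidean_space" and T S :: "'b::euclidean_space set"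
  shows "Pair x0 ` T face_of Pair x0 ` S \<longleftrightarrow> T face_of S"
proof -
  let ?g = "\<lambda>y::'b. (0::'a, y)"
  have "linear ?g" by (rule linearI) auto
  moreover have "inj ?g" by (auto simp: inj_def)
  moreover have "Pair x0 ` U = (+) (x0, 0) ` (?g ` U)" for U by (auto simp: image_image)
  ultimately show ?thesis by (simp add: face_of_linear_image)
qed

lemma extreme_point_of_Pair_image_iff:
  fixes x0 :: "'a::euclidean_space" and S :: "'b::euclidean_space set"
  shows "(x0, v) extreme_point_of Pair x0 ` S \<longleftrightarrow> v extreme_point_of S"
  using face_of_Pair_image_iff[of x0 "{v}" S] by (simp add: face_of_singleton)

lemma closed_segment_Pair:
  fixes x0 :: "'a::euclidean_space" and v w :: "'b::euclidean_space"
  shows "closed_segment (x0, v) (x0, w) = Pair x0 ` closed_segment v w"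
proof -
  let ?g = "\<lambda>y::'b. (0::'a, y)"
  have "linear ?g" by (rule linearI) auto
  then have "closed_segment ((x0, 0) + ?g v) ((x0, 0) + ?g w)
      = (+) (x0, 0) ` (?g ` closed_segment v w)"
    by (metis closed_segment_linear_image closed_segment_translation)
  then show ?thesis by (simp add: image_image)
qed

lemma edge_walk_Pair_image:
  fixes x0 :: "'a::euclidean_space" and S :: "'b::euclidean_space set"
  assumes "edge_walk S vs"
  shows "edge_walk (Pair x0 ` S) (map (Pair x0) vs)"
  using assms
  by (simp add: edge_walk_def poly_adjacent_def extreme_point_of_Pair_image_iff
      closed_segment_Pair face_of_Pair_image_iff)

lemma edge_walk_face:
  assumes "F face_of P" and "edge_walk F vs"
  shows "edge_walk P vs"
  using assms face_of_trans extreme_point_of_face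
  unfolding edge_walk_def poly_adjacent_def by blast

lemma poly_dist_mono_walks:
  assumes "\<And>vs. edge_walk Q vs \<Longrightarrow> edge_walk P (map f vs)"
  shows "poly_dist P (f v) (f w) \<le> poly_dist Q v w"
  unfolding poly_dist_def
proof (rule INF_mono)
  fix vs assume "vs \<in> {vs. edge_walk Q vs \<and> hd vs = v \<and> last vs = w}"
  moreover from this have "vs \<noteq> []" by (simp add: edge_walk_def)
  ultimately show "\<exists>ws\<in>{vs. edge_walk P vs \<and> hd vs = f v \<and> last vs = f w}.
      enat (length ws - 1) \<le> enat (length vs - 1)"
    using assms by (intro bexI[of _ "map f vs"]) (auto simp: hd_map last_map)
qed

lemma poly_dist_face_le:
  assumes "F face_of P"
  shows "poly_dist P v w \<le> poly_dist F v w"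
  using poly_dist_mono_walks[of F P id] edge_walk_face[OF assms] by simp

lemma poly_dist_Pair_image_le:
  fixes x0 :: "'a::euclidean_space" and S :: "'b::euclidean_space set"
  shows "poly_dist (Pair x0 ` S) (x0, v) (x0, w) \<le> poly_dist S v w"
  using poly_dist_mono_walks[of S "Pair x0 ` S" "Pair x0"] edge_walk_Pair_image by blast

lemma poly_dist_le_poly_diam:
  assumes "v extreme_point_of P" and "w extreme_point_of P"
  shows "poly_dist P v w \<le> poly_diam P"
  unfolding poly_diam_def using assms by (intro SUP_upper2[of "(v, w)"]) auto

lemma poly_diam_le_mat_diam: "poly_diam (std_poly M r) \<le> mat_diam M"
  unfolding mat_diam_def by (rule SUP_upper) simp

lemma convex_std_poly: "convex (std_poly M r)"
  unfolding convex_def std_poly_def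
  by (auto simp: matrix_vector_right_distrib matrix_vector_mult_scaleR simp flip: scaleR_add_left)

definition stack_vec :: "real \<Rightarrow> real^'m \<Rightarrow> real^('m option)" where
  "stack_vec s c = (\<chi> i. case i of None \<Rightarrow> s | Some j \<Rightarrow> c $ j)"

lemma stack_row_mult_vec: "stack_row b B *v z = stack_vec (b \<bullet> z) (B *v z)"
  by (simp add: vec_eq_iff stack_row_def stack_vec_def matrix_vector_mult_def inner_vec_def
      split: option.split)

lemma stack_vec_eq_iff: "stack_vec s c = stack_vec s' c' \<longleftrightarrow> s = s' \<and> c = c'"
proof
  assume eq: "stack_vec s c = stack_vec s' c'"
  have "s = s'" using arg_cong[OF eq, of "\<lambda>v. v $ None"] by (simp add: stack_vec_def)
  moreover have "c $ j = c' $ j" for j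
    using arg_cong[OF eq, of "\<lambda>v. v $ Some j"] by (simp add: stack_vec_def)
  ultimately show "s = s' \<and> c = c'" by (simp add: vec_eq_iff)
qed simp

lemma std_poly_stack_row:
  "std_poly (stack_row b B) (stack_vec s c) = std_poly B c \<inter> {z. b \<bullet> z = s}"
  by (auto simp: std_poly_def stack_row_mult_vec stack_vec_eq_iff)

lemma R_poly_eq:
  "R_poly A a b B cA cB ca cb
     = (std_poly A cA \<times> std_poly B cB) \<inter> {p. (a, b) \<bullet> p = ca + cb}"
  by (auto simp: R_poly_def std_poly_def)

lemma convex_R_poly: "convex (R_poly A a b B cA cB ca cb)"
  unfolding R_poly_eq by (intro convex_Int convex_Times convex_std_poly convex_hyperplane)

lemma fibre_face_of_extreme_point:
  fixes S :: "('a::euclidean_space \<times> 'b::euclidean_space) set"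
  assumes "convex S" and "S \<subseteq> T \<times> UNIV" and "x extreme_point_of T"
  shows "({x} \<times> UNIV) \<inter> S face_of S"
proof -
  have "{x} \<times> UNIV face_of T \<times> (UNIV :: 'b set)"
    using assms(3) by (simp add: face_of_Times face_of_singleton face_of_refl)
  from face_of_slice[OF this assms(1)] show ?thesis
    using assms(2) by (simp add: Int_absorb1)
qed

lemma R_poly_fibre_eq:
  assumes "x \<in> std_poly A cA"
  shows "({x} \<times> UNIV) \<inter> R_poly A a b B cA cB ca cb
       = Pair x ` std_poly (stack_row b B) (stack_vec (ca + cb - a \<bullet> x) cB)"
  using assms by (auto simp: R_poly_eq std_poly_stack_row algebra_simps)

theorem lemma3:
  fixes A :: "real^'n1^'m1" and a :: "real^'n1" and b :: "real^'n2"
    and B :: "real^'n2^'m2" and cA :: "real^'m1" and cB :: "real^'m2" and ca cb :: real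
    and x :: "real^'n1" and y y' :: "real^'n2"
  assumes "a \<noteq> 0" and "b \<noteq> 0"
    and "simple_polyhedron (R_poly A a b B cA cB ca cb)"
    and "(x, y) extreme_point_of (R_poly A a b B cA cB ca cb)"
    and "(x, y') extreme_point_of (R_poly A a b B cA cB ca cb)"
    and "x extreme_point_of (std_poly A cA)"
  shows "poly_dist (R_poly A a b B cA cB ca cb) (x, y) (x, y') \<le> mat_diam (stack_row b B)"
proof -
  let ?R = "R_poly A a b B cA cB ca cb"
  let ?Q = "std_poly (stack_row b B) (stack_vec (ca + cb - a \<bullet> x) cB)"
  have fibre: "({x} \<times> UNIV) \<inter> ?R = Pair x ` ?Q"
    using assms(6) by (intro R_poly_fibre_eq) (simp add: extreme_point_of_def)
  have "?R \<subseteq> std_poly A cA \<times> UNIV" by (auto simp: R_poly_eq)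
  from fibre_face_of_extreme_point[OF convex_R_poly this assms(6)]
  have face: "Pair x ` ?Q face_of ?R" unfolding fibre .
  have "v extreme_point_of ?Q" if "(x, v) extreme_point_of ?R" for v
  proof -
    have "(x, v) \<in> Pair x ` ?Q"
      using that unfolding fibre[symmetric] by (simp add: extreme_point_of_def)
    with that have "(x, v) extreme_point_of Pair x ` ?Q"
      by (simp add: extreme_point_of_face[OF face])
    then show ?thesis by (simp only: extreme_point_of_Pair_image_iff)
  qed
  with assms(4,5) have "y extreme_point_of ?Q" "y' extreme_point_of ?Q" by auto
  have "poly_dist ?R (x, y) (x, y') \<le> poly_dist (Pair x ` ?Q) (x, y) (x, y')"
    by (rule poly_dist_face_le[OF face])
  also have "\<dots> \<le> poly_dist ?Q y y'" by (rule poly_dist_Pair_image_le)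
  also have "\<dots> \<le> poly_diam ?Q" by (rule poly_dist_le_poly_diam) fact+
  also have "\<dots> \<le> mat_diam (stack_row b B)" by (rule poly_diam_le_mat_diam)
  finally show ?thesis .
qed

end
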